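(* Under the assumptions of the context, there is a neighborhood $V$ of $\bar\xi$ such that for each $\xi\in V$ one of the following holds: either \[ \bar\Delta(t,\xi)=|t-\nu_2(\xi)|^2\,(t-\nu_1(\xi))\quad\text{with }\nu_1(\xi)\in\mathbb R,\ \nu_1(\xi)\le0, \] or \[ \bar\Delta(t,\xi)=\prod_{k=1}^3(t-\nu_k(\xi))\quad\text{with all }\nu_k(\xi)\in\mathbb R,\ \nu_k(\xi)\le0 . \]
   Context: Let $a(t,\xi),b(t,\xi)$ be real-valued $C^\infty$ functions on $(-c,T)\times(\mathbb R^n\setminus\{0\})$, homogeneous of degree $0$ in $\xi$, with $\Delta:=4a^3-27b^2\ge0$ for $t\in[0,T)$. Let $|\bar\xi|=1$ with $a(0,\bar\xi)=0$, $\partial_ta(0,\bar\xi)\ne0$. Near $(0,\bar\xi)$ write $\Delta(t,\xi)=e_2(t,\xi)\bar\Delta(t,\xi)$ with $e_2>0$ smooth and $\bar\Delta(t,\xi)=t^3+a_1(\xi)t^2+a_2(\xi)t+a_3(\xi)$, $a_j$ smooth real-valued with $a_j(\bar\xi)=0$; $\nu_k(\xi)$ denote the roots in $t$ of $\bar\Delta(t,\xi)=0$. *)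

theory Defs
  imports "HOL-Analysis.Analysis"
begin

fun Ck_on :: "nat \<Rightarrow> 'a::euclidean_space set \<Rightarrow> ('a \<Rightarrow> real) \<Rightarrow> bool" where
  "Ck_on 0 S f \<longleftrightarrow> continuous_on S f"
| "Ck_on (Suc k) S f \<longleftrightarrow> continuous_on S f \<and> f differentiable_on S \<and>
     (\<forall>v. Ck_on k S (\<lambda>x. frechet_derivative f (at x) v))"

definition smooth_on :: "'a::euclidean_space set \<Rightarrow> ('a \<Rightarrow> real) \<Rightarrow> bool" where
  "smooth_on S f \<longleftrightarrow> (\<forall>k. Ck_on k S f)"

definition Dbar :: "('n \<Rightarrow> real) \<Rightarrow> ('n \<Rightarrow> real) \<Rightarrow> ('n \<Rightarrow> real) \<Rightarrow> real \<Rightarrow> 'n \<Rightarrow> real" where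
  "Dbar a1 a2 a3 t \<xi> = t ^ 3 + a1 \<xi> * t ^ 2 + a2 \<xi> * t + a3 \<xi>"

end

theory Submission
  imports Defs "HOL-Real_Asymp.Real_Asymp"
begin

text \<open>Near \<open>t = 0\<close> the factorisation and \<open>\<Delta> \<ge> 0\<close> give \<open>Dbar(t, \<xi>) \<ge> 0\<close>; for larger \<open>t\<close> the
  leading term \<open>t\<^sup>3\<close> dominates once \<open>\<xi>\<close> is so close to \<open>\<xi>0\<close> that the coefficients \<open>a\<^sub>j(\<xi>)\<close> are
  small. A monic real cubic which is nonnegative on \<open>[0, \<infinity>)\<close> has a root \<open>\<nu>1 \<le> 0\<close>, and the
  remaining quadratic factor is nonnegative for \<open>t > 0\<close>: either its roots are a complex
  conjugate pair, or both are real and nonpositive. The hypotheses on \<open>a\<close>, \<open>b\<close> and \<open>e2\<close>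
  beyond the factorisation and \<open>\<Delta> \<ge> 0\<close> are only needed to produce the factorisation,
  which is assumed here.\<close>

lemma monic_cubic_has_nonpos_root:
  fixes p q r :: real
  assumes "r \<ge> 0"
  shows "\<exists>x\<le>0. x^3 + p*x^2 + q*x + r = 0"
proof -
  have "filterlim (\<lambda>x. x^3 + p*x^2 + q*x + r) at_bot at_bot"
    by real_asymp
  then have "eventually (\<lambda>x. x^3 + p*x^2 + q*x + r \<le> 0) at_bot"
    by (simp add: filterlim_at_bot)
  then obtain m where m: "m \<le> 0" "m^3 + p*m^2 + q*m + r \<le> 0"
    unfolding eventually_at_bot_linorder by (metis min.cobounded1 min.cobounded2)
  have "\<exists>x\<ge>m. x \<le> 0 \<and> x^3 + p*x^2 + q*x + r = 0"
    by (rule IVT[of "\<lambda>x. x^3 + p*x^2 + q*x + r"]) (use m assms in \<open>auto intro!: continuous_intros\<close>)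
  then show ?thesis
    by auto
qed

lemma monic_quadratic_nonneg_on_pos_cases:
  fixes B C :: real
  assumes nonneg: "\<And>t. t > 0 \<Longrightarrow> t^2 + B*t + C \<ge> 0"
  shows "(\<exists>w::complex. \<forall>t::real. t^2 + B*t + C = (cmod (complex_of_real t - w))\<^sup>2)
    \<or> (\<exists>\<nu>1 \<nu>2::real. \<nu>1 \<le> 0 \<and> \<nu>2 \<le> 0 \<and> (\<forall>t::real. t^2 + B*t + C = (t - \<nu>1) * (t - \<nu>2)))"
proof (cases "B^2 \<le> 4*C")
  case True
  define w where "w = Complex (-B/2) (sqrt (C - B^2/4))"
  have "t^2 + B*t + C = (cmod (complex_of_real t - w))\<^sup>2" for t
    using True unfolding cmod_power2 w_def by (simp add: algebra_simps power2_eq_square)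
  then show ?thesis
    by blast
next
  case False
  define D where "D = B^2 - 4*C"
  have D: "D > 0"
    using False unfolding D_def by simp
  define \<nu>1 where "\<nu>1 = (-B - sqrt D)/2"
  define \<nu>2 where "\<nu>2 = (-B + sqrt D)/2"
  have roots: "t^2 + B*t + C = (t - \<nu>1) * (t - \<nu>2)" for t
  proof -
    have "sqrt D * sqrt D = D"
      using D by simp
    then show ?thesis
      unfolding \<nu>1_def \<nu>2_def D_def power2_eq_square by algebra
  qed
  have "\<nu>1 < \<nu>2"
    unfolding \<nu>1_def \<nu>2_def using D by simp
  have "\<nu>2 \<le> 0"
  proof (rule ccontr)
    assume "\<not> \<nu>2 \<le> 0"
    define t where "t = (max \<nu>1 0 + \<nu>2)/2"
    have "t > 0" "\<nu>1 < t" "t < \<nu>2"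
      using \<open>\<nu>1 < \<nu>2\<close> \<open>\<not> \<nu>2 \<le> 0\<close> unfolding t_def by auto
    then have "(t - \<nu>1) * (t - \<nu>2) < 0"
      by (simp add: mult_pos_neg)
    then show False
      using nonneg[OF \<open>t > 0\<close>] roots[of t] by simp
  qed
  moreover from this \<open>\<nu>1 < \<nu>2\<close> have "\<nu>1 \<le> 0"
    by simp
  ultimately show ?thesis
    using roots by blast
qed

lemma monic_cubic_nonneg_on_nonneg_cases:
  fixes p q r :: real
  assumes nonneg: "\<And>t. t \<ge> 0 \<Longrightarrow> t^3 + p*t^2 + q*t + r \<ge> 0"
  shows "(\<exists>\<nu>1::real. \<exists>\<nu>2::complex. \<nu>1 \<le> 0 \<and>
        (\<forall>t::real. t^3 + p*t^2 + q*t + r = (cmod (complex_of_real t - \<nu>2))\<^sup>2 * (t - \<nu>1)))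
   \<or> (\<exists>\<nu>1 \<nu>2 \<nu>3::real. \<nu>1 \<le> 0 \<and> \<nu>2 \<le> 0 \<and> \<nu>3 \<le> 0 \<and>
        (\<forall>t::real. t^3 + p*t^2 + q*t + r = (t - \<nu>1) * (t - \<nu>2) * (t - \<nu>3)))"
proof -
  obtain \<nu>0 where "\<nu>0 \<le> 0" and root: "\<nu>0^3 + p*\<nu>0^2 + q*\<nu>0 + r = 0"
    using monic_cubic_has_nonpos_root[of r p q] nonneg[of 0] by auto
  define B where "B = p + \<nu>0"
  define C where "C = q + \<nu>0*p + \<nu>0^2"
  have factor: "t^3 + p*t^2 + q*t + r = (t^2 + B*t + C) * (t - \<nu>0)" for t
  proof -
    have "t^3 + p*t^2 + q*t + r = (t^2 + B*t + C) * (t - \<nu>0) + (\<nu>0^3 + p*\<nu>0^2 + q*\<nu>0 + r)"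
      unfolding B_def C_def by (simp add: algebra_simps power2_eq_square power3_eq_cube)
    with root show ?thesis
      by simp
  qed
  have "t^2 + B*t + C \<ge> 0" if "t > 0" for t
    using nonneg[of t] factor[of t] that \<open>\<nu>0 \<le> 0\<close> by (simp add: zero_le_mult_iff)
  then consider
      (complex) w :: complex where "\<And>t. t^2 + B*t + C = (cmod (complex_of_real t - w))\<^sup>2"
    | (real) \<nu>1 \<nu>2 where "\<nu>1 \<le> 0" "\<nu>2 \<le> 0" "\<And>t. t^2 + B*t + C = (t - \<nu>1) * (t - \<nu>2)"
    using monic_quadratic_nonneg_on_pos_cases by blast
  then show ?thesis
  proof cases
    case complex
    then show ?thesis
      using factor \<open>\<nu>0 \<le> 0\<close> by auto
  next
    case real
    then have "\<forall>t. t^3 + p*t^2 + q*t + r = (t - \<nu>1) * (t - \<nu>2) * (t - \<nu>0)"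
      using factor by simp
    with real \<open>\<nu>0 \<le> 0\<close> show ?thesis
      by blast
  qed
qed

lemma monic_cubic_pos_beyond:
  fixes d t x y z :: real
  assumes "d > 0" "t \<ge> d" and small: "\<bar>x\<bar> < d/3" "\<bar>y\<bar> < d^2/3" "\<bar>z\<bar> < d^3/3"
  shows "t^3 + x*t^2 + y*t + z > 0"
proof -
  have "t > 0"
    using assms by simp
  have "- x*t^2 \<le> \<bar>x\<bar>*t^2"
    using mult_right_mono[of "-x" "\<bar>x\<bar>" "t^2"] by simp
  also have "\<dots> \<le> (d/3)*t^2"
    using small(1) by (intro mult_right_mono) auto
  also have "\<dots> \<le> (t/3)*t^2"
    using assms by (intro mult_right_mono) auto
  finally have x: "- x*t^2 \<le> t^3/3"
    by (simp add: power2_eq_square power3_eq_cube)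
  have "- y*t \<le> \<bar>y\<bar>*t"
    using \<open>t > 0\<close> mult_right_mono[of "-y" "\<bar>y\<bar>" t] by simp
  also have "\<dots> \<le> (d^2/3)*t"
    using small(2) \<open>t > 0\<close> by (intro mult_right_mono) auto
  also have "\<dots> \<le> (t^2/3)*t"
    using assms \<open>t > 0\<close> by (intro mult_right_mono divide_right_mono power_mono) auto
  finally have y: "- y*t \<le> t^3/3"
    by (simp add: power2_eq_square power3_eq_cube)
  have "d^3 \<le> t^3"
    using assms by (intro power_mono) auto
  with small(3) x y show ?thesis
    by linarith
qed

lemma eventually_nhds_abs_less:
  fixes f :: "'a::t2_space \<Rightarrow> real"
  assumes "isCont f x" "f x = 0" "\<epsilon> > 0"
  shows "eventually (\<lambda>y. \<bar>f y\<bar> < \<epsilon>) (nhds x)"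
proof -
  have "(f \<longlongrightarrow> f x) (nhds x)"
    using assms(1) by (simp only: isCont_def tendsto_at_iff_tendsto_nhds)
  then have "((\<lambda>y. \<bar>f y\<bar>) \<longlongrightarrow> 0) (nhds x)"
    using assms(2) by (simp add: tendsto_rabs_zero)
  with assms(3) show ?thesis
    by (simp add: order_tendstoD(2))
qed

lemma eventually_monic_cubic_nonneg_on_nonneg:
  fixes p q r :: "'a::metric_space \<Rightarrow> real" and x\<^sub>0 :: 'a and U :: "(real \<times> 'a) set"
  assumes cont: "isCont p x\<^sub>0" "isCont q x\<^sub>0" "isCont r x\<^sub>0"
    and vanish: "p x\<^sub>0 = 0" "q x\<^sub>0 = 0" "r x\<^sub>0 = 0"
    and U: "open U" "(0, x\<^sub>0) \<in> U"
    and nonneg: "\<And>t x. (t, x) \<in> U \<Longrightarrow> t \<ge> 0 \<Longrightarrow> t^3 + p x * t^2 + q x * t + r x \<ge> 0"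
  shows "eventually (\<lambda>x. \<forall>t\<ge>0. t^3 + p x * t^2 + q x * t + r x \<ge> 0) (nhds x\<^sub>0)"
proof -
  obtain e where "e > 0" and e: "ball (0, x\<^sub>0) e \<subseteq> U"
    using U open_contains_ball by blast
  define d where "d = e/2"
  have "d > 0"
    using \<open>e > 0\<close> unfolding d_def by simp
  have "eventually (\<lambda>x. dist x x\<^sub>0 < d) (nhds x\<^sub>0)"
    unfolding eventually_nhds_metric using \<open>d > 0\<close> by blast
  then have "eventually (\<lambda>x. \<bar>p x\<bar> < d/3 \<and> \<bar>q x\<bar> < d^2/3 \<and> \<bar>r x\<bar> < d^3/3 \<and> dist x x\<^sub>0 < d) (nhds x\<^sub>0)"
    using \<open>d > 0\<close> by (intro eventually_conj eventually_nhds_abs_less cont vanish) auto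
  then show ?thesis
  proof (rule eventually_mono, safe)
    fix x and t :: real
    assume x: "\<bar>p x\<bar> < d/3" "\<bar>q x\<bar> < d^2/3" "\<bar>r x\<bar> < d^3/3" "dist x x\<^sub>0 < d" and "t \<ge> 0"
    show "t^3 + p x * t^2 + q x * t + r x \<ge> 0"
    proof (cases "t < d")
      case True
      have "dist (0, x\<^sub>0) (t, x) \<le> \<bar>t\<bar> + \<bar>dist x\<^sub>0 x\<bar>"
        using sqrt_sum_squares_le_sum_abs[of t "dist x\<^sub>0 x"] by (simp add: dist_Pair_Pair)
      also have "\<dots> < e"
        using x True \<open>t \<ge> 0\<close> unfolding d_def by (simp add: dist_commute)
      finally have "(t, x) \<in> U"
        using e by auto
      with nonneg \<open>t \<ge> 0\<close> show ?thesis
        by blast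
    next
      case False
      with x \<open>d > 0\<close> show ?thesis
        using monic_cubic_pos_beyond[of d t "p x" "q x" "r x"] by simp
    qed
  qed
qed

lemma smooth_on_imp_isCont:
  assumes "smooth_on S f" "open S" "x \<in> S"
  shows "isCont f x"
proof -
  have "continuous_on S f"
    using assms(1) Ck_on.simps(1) unfolding smooth_on_def by blast
  with assms(2,3) show ?thesis
    using continuous_on_eq_continuous_at by blast
qed

theorem lemma4p3:
  fixes a b e2 :: "real \<times> (real ^ 'n) \<Rightarrow> real"
    and a1 a2 a3 :: "real ^ 'n \<Rightarrow> real"
    and c T :: real and \<xi>0 :: "real ^ 'n"
  assumes cT: "0 < c" "0 < T"
    and a_smooth: "smooth_on ({-c<..<T} \<times> (UNIV - {0})) a"
    and b_smooth: "smooth_on ({-c<..<T} \<times> (UNIV - {0})) b"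
    and a_hom: "\<And>t \<xi> s. t \<in> {-c<..<T} \<Longrightarrow> \<xi> \<noteq> 0 \<Longrightarrow> s > 0 \<Longrightarrow> a (t, s *\<^sub>R \<xi>) = a (t, \<xi>)"
    and b_hom: "\<And>t \<xi> s. t \<in> {-c<..<T} \<Longrightarrow> \<xi> \<noteq> 0 \<Longrightarrow> s > 0 \<Longrightarrow> b (t, s *\<^sub>R \<xi>) = b (t, \<xi>)"
    and hyp: "\<And>t \<xi>. t \<in> {0..<T} \<Longrightarrow> \<xi> \<noteq> 0 \<Longrightarrow> 4 * (a (t, \<xi>)) ^ 3 - 27 * (b (t, \<xi>)) ^ 2 \<ge> 0"
    and norm1: "norm \<xi>0 = 1"
    and a0: "a (0, \<xi>0) = 0"
    and dta: "deriv (\<lambda>t. a (t, \<xi>0)) 0 \<noteq> 0"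
    and U: "open U" "(0, \<xi>0) \<in> U" "U \<subseteq> {-c<..<T} \<times> (UNIV - {0})"
    and e2_smooth: "smooth_on U e2"
    and e2_pos: "\<And>z. z \<in> U \<Longrightarrow> e2 z > 0"
    and W: "open W" "\<xi>0 \<in> W"
    and aj_smooth: "smooth_on W a1" "smooth_on W a2" "smooth_on W a3"
    and aj0: "a1 \<xi>0 = 0" "a2 \<xi>0 = 0" "a3 \<xi>0 = 0"
    and factor: "\<And>t \<xi>. (t, \<xi>) \<in> U \<Longrightarrow> \<xi> \<in> W \<Longrightarrow>
       4 * (a (t, \<xi>)) ^ 3 - 27 * (b (t, \<xi>)) ^ 2 = e2 (t, \<xi>) * Dbar a1 a2 a3 t \<xi>"
  shows "\<exists>V. open V \<and> \<xi>0 \<in> V \<and> (\<forall>\<xi>\<in>V.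
     (\<exists>\<nu>1::real. \<exists>\<nu>2::complex. \<nu>1 \<le> 0 \<and>
        (\<forall>t::real. Dbar a1 a2 a3 t \<xi> = (cmod (complex_of_real t - \<nu>2))\<^sup>2 * (t - \<nu>1)))
   \<or> (\<exists>\<nu>1 \<nu>2 \<nu>3::real. \<nu>1 \<le> 0 \<and> \<nu>2 \<le> 0 \<and> \<nu>3 \<le> 0 \<and>
        (\<forall>t::real. Dbar a1 a2 a3 t \<xi> = (t - \<nu>1) * (t - \<nu>2) * (t - \<nu>3))))"
proof -
  have Dbar_nonneg: "Dbar a1 a2 a3 t \<xi> \<ge> 0" if "(t, \<xi>) \<in> U \<inter> UNIV \<times> W" "t \<ge> 0" for t \<xi>
  proof -
    have "t < T" "\<xi> \<noteq> 0"
      using that U(3) by auto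
    then have "0 \<le> e2 (t, \<xi>) * Dbar a1 a2 a3 t \<xi>"
      using that hyp[of t \<xi>] factor[of t \<xi>] by simp
    with e2_pos[of "(t, \<xi>)"] that show ?thesis
      by (simp add: zero_le_mult_iff)
  qed
  have "isCont a1 \<xi>0" "isCont a2 \<xi>0" "isCont a3 \<xi>0"
    using smooth_on_imp_isCont[OF _ W] aj_smooth by auto
  moreover note aj0
  moreover have "open (U \<inter> UNIV \<times> W)"
    using U(1) W(1) by (intro open_Int open_Times) auto
  moreover have "(0, \<xi>0) \<in> U \<inter> UNIV \<times> W"
    using U(2) W(2) by simp
  ultimately have "eventually (\<lambda>\<xi>. \<forall>t\<ge>0. t^3 + a1 \<xi> * t^2 + a2 \<xi> * t + a3 \<xi> \<ge> 0) (nhds \<xi>0)"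
    using Dbar_nonneg[unfolded Dbar_def] by (rule eventually_monic_cubic_nonneg_on_nonneg)
  then obtain V where "open V" "\<xi>0 \<in> V"
    and V: "\<And>\<xi> t. \<xi> \<in> V \<Longrightarrow> t \<ge> 0 \<Longrightarrow> t^3 + a1 \<xi> * t^2 + a2 \<xi> * t + a3 \<xi> \<ge> 0"
    unfolding eventually_nhds by blast
  then show ?thesis
    unfolding Dbar_def by (intro exI[of _ V] conjI ballI monic_cubic_nonneg_on_nonneg_cases)
qed

end
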